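(* Let $\eta=3/\sqrt{8\pi e}$. (a) For $n\in\mathbb{N}$ let $h=2/\sqrt n$ and $\mathcal X=\{-\sqrt n+\frac{2k}{\sqrt n}:k=0,1,\dots,n\}$. For a $2\times2$ positive definite matrix $B$ and $\mathbf x=(x_1,x_2)^{\top}$ define $$I_d=\int_{\mathbb{R}}h\sum_{x_1\in\mathcal X}\exp\{-\mathbf x^{\top}B\mathbf x/2\}\,dx_2,\qquad I_c=\int_{\mathbb{R}^2}\exp\{-\mathbf x^{\top}B\mathbf x/2\}\,d\mathbf x.$$ Then $I_d\le(1+\frac{\eta B_{11}}{n})I_c$. (b) For $n,n'\in\mathbb{N}$ let additionally $h'=2/\sqrt{n'}$ and $\mathcal X'=\{-\sqrt{n'}+\frac{2k}{\sqrt{n'}}:k=0,\dots,n'\}$. For a $3\times3$ positive definite $B$ and $\mathbf x=(x_1,x_2,x_3)^{\top}$ define $$I_d=\int_{\mathbb{R}}hh'\sum_{x_1\in\mathcal X}\sum_{x_2\in\mathcal X'}\exp\{-\mathbf x^{\top}B\mathbf x/2\}\,dx_3,\qquad I_c=\int_{\mathbb{R}^3}\exp\{-\mathbf x^{\top}B\mathbf x/2\}\,d\mathbf x.$$ Then $I_d\le(1+\frac{\eta B_{11}}{n})(1+\frac{\eta B_{22}}{n'})I_c$.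
   Context: $B_{ij}$ denotes the $(i,j)$ entry of $B$. *)

theory Defs
  imports "HOL-Analysis.Analysis"
begin

definition eta :: real where
  "eta = 3 / sqrt (8 * pi * exp 1)"

definition grid :: "nat \<Rightarrow> real set" where
  "grid n = (\<lambda>k::nat. - sqrt (real n) + 2 * real k / sqrt (real n)) ` {0..n}"

definition pos_def_mat :: "real^'n^'n \<Rightarrow> bool" where
  "pos_def_mat B \<longleftrightarrow> transpose B = B \<and> (\<forall>x. x \<noteq> 0 \<longrightarrow> x \<bullet> (B *v x) > 0)"

definition gauss :: "real^'n^'n \<Rightarrow> real^'n \<Rightarrow> real" where
  "gauss B x = exp (- (x \<bullet> (B *v x)) / 2)"

end

theory Submission
  imports Defs "HOL-Probability.Distributions"
begin

text \<open>If the derivative of a smooth \<open>f\<close> becomes nondecreasing after adding a bounded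
  nondecreasing \<open>\<phi>\<close>, the midpoint rule on a cell of width \<open>h\<close> exceeds the integral over the cell
  by at most \<open>h\<^sup>2 / 8\<close> times the increase of \<open>\<phi>\<close> across the cell; over a whole grid this
  telescopes to \<open>h\<^sup>2 / 8 * sup \<phi>\<close>. For the standard Gaussian \<open>\<phi>\<close> can be taken with values in
  \<open>[0, 2 exp (-1/2)]\<close>, and rescaling shows that the grid sum of \<open>exp (- b (x - \<mu>)\<^sup>2 / 2)\<close> is at
  most \<open>1 + eta * b / n\<close> times its integral.

  Completing the square in \<open>x\<^sub>1\<close> factors \<open>exp (- x\<^sup>T B x / 2)\<close> into a one-dimensional Gaussian in
  \<open>x\<^sub>1\<close> with coefficient \<open>B\<^sub>1\<^sub>1\<close> and a Gaussian of the Schur complement of \<open>B\<^sub>1\<^sub>1\<close> in the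
  remaining variables. So the one-dimensional bound holds pointwise in the other variables, and
  Fubini gives (a). In (b) the sum over \<open>x\<^sub>2\<close> is then bounded by (a) for the Schur complement,
  whose first diagonal entry is at most \<open>B\<^sub>2\<^sub>2\<close>.\<close>

section \<open>The midpoint rule\<close>

lemma midpoint_symmetric_le:
  fixes f f' \<phi> :: "real \<Rightarrow> real"
  assumes f': "\<And>x. (f has_real_derivative f' x) (at x)"
    and \<phi>: "mono \<phi>" and f'\<phi>: "mono (\<lambda>x. f' x + \<phi> x)"
    and u: "0 \<le> u" "u \<le> r"
  shows "2 * f m \<le> f (m + u) + f (m - u) + u * (\<phi> (m + r) - \<phi> (m - r))"
proof -
  define D where "D = \<phi> (m + u) - \<phi> (m - u)"
  define E where "E s = f (m + s) + f (m - s) + s * D" for s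
  have "E 0 \<le> E u"
  proof (rule DERIV_nonneg_imp_nondecreasing[OF u(1)])
    fix s assume s: "0 \<le> s" "s \<le> u"
    have "(E has_real_derivative f' (m + s) - f' (m - s) + D) (at s)"
      unfolding E_def
      by (rule derivative_eq_intros DERIV_chain2[OF f'] refl | simp)+
    moreover have "f' (m - s) + \<phi> (m - s) \<le> f' (m + s) + \<phi> (m + s)"
      using monoD[OF f'\<phi>, of "m - s" "m + s"] s by simp
    moreover have "\<phi> (m + s) \<le> \<phi> (m + u)" "\<phi> (m - u) \<le> \<phi> (m - s)"
      using s by (auto intro: monoD[OF \<phi>])
    ultimately show "\<exists>y. (E has_real_derivative y) (at s) \<and> 0 \<le> y"
      unfolding D_def by fastforce
  qed
  moreover have "u * D \<le> u * (\<phi> (m + r) - \<phi> (m - r))"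
    using u monoD[OF \<phi>, of "m + u" "m + r"] monoD[OF \<phi>, of "m - r" "m - u"]
    by (intro mult_left_mono) (auto simp: D_def)
  ultimately show ?thesis by (simp add: E_def)
qed

lemma has_real_derivative_integral_at:
  assumes "continuous_on UNIV f" "a < x"
  shows "((\<lambda>y. integral {a..y} f) has_real_derivative f x) (at x)"
proof -
  have "((\<lambda>y. integral {a..y} f) has_real_derivative f x) (at x within {a..x + 1})"
    using assms by (intro integral_has_real_derivative) (auto intro: continuous_on_subset)
  moreover have "at x within {a..x + 1} = at x"
    using assms by (intro at_within_interior) auto
  ultimately show ?thesis by simp
qed

lemma midpoint_rule_le:
  fixes f f' \<phi> :: "real \<Rightarrow> real"
  assumes f': "\<And>x. (f has_real_derivative f' x) (at x)"
    and \<phi>: "mono \<phi>" and f'\<phi>: "mono (\<lambda>x. f' x + \<phi> x)"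
    and h: "0 \<le> h"
  shows "h * f m \<le> integral {m - h/2 .. m + h/2} f + h\<^sup>2 / 8 * (\<phi> (m + h/2) - \<phi> (m - h/2))"
proof -
  have f: "continuous_on UNIV f"
    using f' by (metis DERIV_isCont continuous_at_imp_continuous_on)
  define P where "P x = integral {m - h - 1 .. x} f" for x
  define \<Delta> where "\<Delta> = \<phi> (m + h/2) - \<phi> (m - h/2)"
  define E where "E u = P (m + u) - P (m - u) - 2 * u * f m + \<Delta> * u\<^sup>2 / 2" for u
  have "E 0 \<le> E (h/2)"
  proof (rule DERIV_nonneg_imp_nondecreasing[of 0])
    show "0 \<le> h/2" using h by simp
  next
    fix u assume u: "0 \<le> u" "u \<le> h/2"
    have P': "(P has_real_derivative f y) (at y)" if "m - h - 1 < y" for y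
      unfolding P_def using f that by (rule has_real_derivative_integral_at)
    have "((\<lambda>u. P (m + u)) has_real_derivative f (m + u) * 1) (at u)"
      using u h by (intro DERIV_chain2[OF P'] derivative_eq_intros) auto
    moreover have "((\<lambda>u. P (m - u)) has_real_derivative f (m - u) * (- 1)) (at u)"
      using u h by (intro DERIV_chain2[OF P'] derivative_eq_intros) auto
    ultimately have "(E has_real_derivative f (m + u) + f (m - u) - 2 * f m + \<Delta> * u) (at u)"
      unfolding E_def by (auto intro!: derivative_eq_intros simp: power2_eq_square)
    moreover have "0 \<le> f (m + u) + f (m - u) - 2 * f m + \<Delta> * u"
      using midpoint_symmetric_le[OF f' \<phi> f'\<phi> u, of m] unfolding \<Delta>_def by (simp add: mult.commute)
    ultimately show "\<exists>y. (E has_real_derivative y) (at u) \<and> 0 \<le> y" by blast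
  qed
  moreover have "P (m + h/2) - P (m - h/2) = integral {m - h/2 .. m + h/2} f"
    unfolding P_def
    using h integrable_continuous_real[OF continuous_on_subset[OF f]]
      Henstock_Kurzweil_Integration.integral_combine[where a="m - h - 1" and c="m - h/2"
        and b="m + h/2" and f=f]
    by simp
  ultimately show ?thesis
    unfolding E_def \<Delta>_def by (simp add: power2_eq_square mult_ac)
qed

lemma riemann_sum_le_integral:
  fixes f f' \<phi> :: "real \<Rightarrow> real"
  assumes f': "\<And>x. (f has_real_derivative f' x) (at x)"
    and \<phi>: "mono \<phi>" and f'\<phi>: "mono (\<lambda>x. f' x + \<phi> x)"
    and f: "\<And>x. 0 \<le> f x" "(f has_integral I) UNIV"
    and \<phi>_bounds: "\<And>x. 0 \<le> \<phi> x" "\<And>x. \<phi> x \<le> \<Phi>"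
    and h: "0 \<le> h"
  shows "h * (\<Sum>k<N. f (s + real k * h)) \<le> I + h\<^sup>2 / 8 * \<Phi>"
proof -
  have int: "f integrable_on {a..b}" for a b
    using f(2) by (rule integrable_on_subinterval[OF has_integral_integrable]) simp
  define t where "t k = s - h/2 + real k * h" for k
  define R where "R x = integral {t 0..x} f + h\<^sup>2 / 8 * \<phi> x" for x
  have "h * f (s + real k * h) \<le> R (t (Suc k)) - R (t k)" for k
  proof -
    have "integral {t 0..t k} f + integral {t k..t (Suc k)} f = integral {t 0..t (Suc k)} f"
      using h int
      by (intro Henstock_Kurzweil_Integration.integral_combine) (auto simp: t_def algebra_simps)
    moreover have "h * f (s + real k * h)
        \<le> integral {t k..t (Suc k)} f + h\<^sup>2 / 8 * (\<phi> (t (Suc k)) - \<phi> (t k))"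
    proof -
      have "s + real k * h - h/2 = t k" "s + real k * h + h/2 = t (Suc k)"
        by (simp_all add: t_def algebra_simps)
      then show ?thesis using midpoint_rule_le[OF f' \<phi> f'\<phi> h, of "s + real k * h"] by simp
    qed
    ultimately show ?thesis unfolding R_def right_diff_distrib by linarith
  qed
  then have "h * (\<Sum>k<N. f (s + real k * h)) \<le> (\<Sum>k<N. R (t (Suc k)) - R (t k))"
    by (simp add: sum_distrib_left sum_mono)
  also have "\<dots> = R (t N) - R (t 0)" by (rule sum_lessThan_telescope)
  also have "\<dots> \<le> I + h\<^sup>2 / 8 * \<Phi>"
  proof -
    have "integral {t 0..t N} f \<le> I"
      using integral_subset_le[of "{t 0..t N}" UNIV f] int f integral_unique[OF f(2)]
      by (auto simp: has_integral_integrable[OF f(2)])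
    moreover have "h\<^sup>2 / 8 * (\<phi> (t N) - \<phi> (t 0)) \<le> h\<^sup>2 / 8 * \<Phi>"
      using \<phi>_bounds[of "t 0"] \<phi>_bounds[of "t N"] by (intro mult_left_mono) auto
    ultimately show ?thesis unfolding R_def by (simp add: right_diff_distrib)
  qed
  finally show ?thesis .
qed

section \<open>Riemann sums of one-dimensional Gaussians\<close>

definition gaussian :: "real \<Rightarrow> real \<Rightarrow> real \<Rightarrow> real" where
  "gaussian b \<mu> x = exp (- (b * (x - \<mu>)\<^sup>2) / 2)"

lemma has_integral_gaussian:
  assumes b: "b > 0"
  shows "(gaussian b \<mu> has_integral sqrt (2 * pi / b)) UNIV"
proof -
  define \<sigma> where "\<sigma> = 1 / sqrt b"
  have \<sigma>: "\<sigma> > 0" "\<sigma>\<^sup>2 = 1 / b" using b by (simp_all add: \<sigma>_def power_divide)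
  have "(normal_density \<mu> \<sigma> has_integral 1) UNIV"
    using has_integral_integral_lborel[OF integrable_normal_density[where \<mu>=\<mu> and \<sigma>=\<sigma>]] \<sigma>
    by simp
  then have "((\<lambda>x. sqrt (2 * pi / b) * normal_density \<mu> \<sigma> x) has_integral sqrt (2 * pi / b)) UNIV"
    by (rule has_integral_mult_right[where c="sqrt (2 * pi / b)", THEN has_integral_eq_rhs]) simp
  moreover have "sqrt (2 * pi / b) * normal_density \<mu> \<sigma> x = gaussian b \<mu> x" for x
    using \<sigma> b unfolding normal_density_def gaussian_def by simp
  ultimately show ?thesis by simp
qed

lemma abs_mult_exp_neg_square_le: "\<bar>(t::real) * exp (- t\<^sup>2 / 2)\<bar> \<le> exp (- 1 / 2)"
proof -
  have "0 \<le> (\<bar>t\<bar> - 1)\<^sup>2" by simp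
  then have "\<bar>t\<bar> \<le> 1 + (t\<^sup>2 - 1) / 2" by (simp add: power2_diff field_simps)
  also have "\<dots> \<le> exp ((t\<^sup>2 - 1) / 2)" by (rule exp_ge_add_one_self)
  finally have "\<bar>t\<bar> * exp (- t\<^sup>2 / 2) \<le> exp ((t\<^sup>2 - 1) / 2) * exp (- t\<^sup>2 / 2)"
    by (intro mult_right_mono) auto
  also have "\<dots> = exp (- 1 / 2)" by (simp add: exp_add[symmetric] field_simps)
  finally show ?thesis by (simp add: abs_mult)
qed

lemma has_real_derivative_mult_exp_neg_square:
  "((\<lambda>t::real. t * exp (- t\<^sup>2 / 2)) has_real_derivative (1 - t\<^sup>2) * exp (- t\<^sup>2 / 2)) (at t)"
  by (auto intro!: derivative_eq_intros simp: power2_eq_square algebra_simps)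

lemma mult_exp_neg_square_mono:
  fixes x y :: real
  assumes "-1 \<le> x" "x \<le> y" "y \<le> 1"
  shows "x * exp (- x\<^sup>2 / 2) \<le> y * exp (- y\<^sup>2 / 2)"
  using assms(2)
proof (rule DERIV_nonneg_imp_nondecreasing)
  fix z assume "x \<le> z" "z \<le> y"
  with assms have "z\<^sup>2 \<le> 1" by (simp add: abs_square_le_1)
  then show "\<exists>d. ((\<lambda>t. t * exp (- t\<^sup>2 / 2)) has_real_derivative d) (at z) \<and> 0 \<le> d"
    using has_real_derivative_mult_exp_neg_square by fastforce
qed

lemma mult_exp_neg_square_antimono:
  fixes x y :: real
  assumes "x \<le> y" "1 \<le> x \<or> y \<le> -1"
  shows "y * exp (- y\<^sup>2 / 2) \<le> x * exp (- x\<^sup>2 / 2)"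
  using assms(1)
proof (rule DERIV_nonpos_imp_nonincreasing)
  fix z assume "x \<le> z" "z \<le> y"
  with assms have "1 \<le> \<bar>z\<bar>" by auto
  then have "1 \<le> z\<^sup>2" using abs_le_square_iff[of 1 z] by simp
  then show "\<exists>d. ((\<lambda>t. t * exp (- t\<^sup>2 / 2)) has_real_derivative d) (at z) \<and> d \<le> 0"
    using has_real_derivative_mult_exp_neg_square by (fastforce simp: mult_nonpos_nonneg)
qed

text \<open>The accumulated decrease of the derivative \<open>- t * exp (- t\<^sup>2 / 2)\<close> of the standard Gaussian,
  which decreases exactly on \<open>[-1, 1]\<close>, by \<open>2 * exp (-1/2)\<close> in total.\<close>

definition std_gaussian_correction :: "real \<Rightarrow> real" where
  "std_gaussian_correction t =
     (let c = max (- 1) (min 1 t) in exp (- 1 / 2) + c * exp (- c\<^sup>2 / 2))"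

lemma std_gaussian_correction_bounds:
  "0 \<le> std_gaussian_correction t" "std_gaussian_correction t \<le> 2 * exp (- 1 / 2)"
  using abs_mult_exp_neg_square_le[of "max (- 1) (min 1 t)"]
  unfolding std_gaussian_correction_def Let_def by linarith+

lemma mono_std_gaussian_correction: "mono std_gaussian_correction"
  unfolding std_gaussian_correction_def Let_def
  by (intro monoI add_left_mono mult_exp_neg_square_mono) auto

lemma mono_std_gaussian_derivative_plus_correction:
  "mono (\<lambda>t. - (t * exp (- t\<^sup>2 / 2)) + std_gaussian_correction t)"
proof (rule monoI)
  define e :: real where "e = exp (- 1 / 2)"
  define g where "g t = - (t * exp (- t\<^sup>2 / 2)) + std_gaussian_correction t" for t
  have left: "g t = - (t * exp (- t\<^sup>2 / 2))" if "t \<le> -1" for t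
    using that by (simp add: g_def std_gaussian_correction_def)
  have right: "g t = 2 * e - t * exp (- t\<^sup>2 / 2)" if "1 \<le> t" for t
    using that by (simp add: g_def std_gaussian_correction_def e_def)
  have mid: "g t = e" if "-1 \<le> t" "t \<le> 1" for t
    using that by (simp add: g_def std_gaussian_correction_def e_def max_def min_def)
  have bound: "\<bar>t * exp (- t\<^sup>2 / 2)\<bar> \<le> e" for t
    unfolding e_def by (rule abs_mult_exp_neg_square_le)
  have le_e: "g t \<le> e" if "t \<le> 1" for t
    using left[of t] mid[of t] bound[of t] that by (cases "t \<le> -1") auto
  have ge_e: "e \<le> g t" if "-1 \<le> t" for t
    using right[of t] mid[of t] bound[of t] that by (cases "1 \<le> t") auto
  fix x y :: real assume xy: "x \<le> y"
  show "g x \<le> g y"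
  proof (cases "y \<le> -1")
    case True
    then show ?thesis using left[of x] left[of y] xy mult_exp_neg_square_antimono[OF xy] by simp
  next
    case y: False
    show ?thesis
    proof (cases "x \<le> 1")
      case True
      then show ?thesis using le_e[of x] ge_e[of y] y by simp
    next
      case False
      then show ?thesis using right[of x] right[of y] xy mult_exp_neg_square_antimono[OF xy] by simp
    qed
  qed
qed

lemma std_gaussian_riemann_sum_le:
  assumes "0 \<le> h"
  shows "h * (\<Sum>k<N. exp (- (s + real k * h)\<^sup>2 / 2)) \<le> sqrt (2 * pi) + h\<^sup>2 / 4 * exp (- 1 / 2)"
proof -
  have "((\<lambda>t. exp (- t\<^sup>2 / 2)) has_integral sqrt (2 * pi)) UNIV"
    using has_integral_gaussian[of 1 0] by (simp add: gaussian_def[abs_def])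
  then have "h * (\<Sum>k<N. exp (- (s + real k * h)\<^sup>2 / 2))
      \<le> sqrt (2 * pi) + h\<^sup>2 / 8 * (2 * exp (- 1 / 2))"
    by (intro riemann_sum_le_integral[where f' = "\<lambda>t. - (t * exp (- t\<^sup>2 / 2))"
          and \<phi> = std_gaussian_correction] mono_std_gaussian_correction
        mono_std_gaussian_derivative_plus_correction std_gaussian_correction_bounds assms)
      (auto intro!: derivative_eq_intros simp: power2_eq_square)
  then show ?thesis by simp
qed

lemma gaussian_riemann_sum_le:
  assumes b: "b > 0" and h: "0 \<le> h"
  shows "h * (\<Sum>k<N. gaussian b \<mu> (s + real k * h))
           \<le> sqrt (2 * pi / b) + h\<^sup>2 / 4 * sqrt b * exp (- 1 / 2)"
proof -
  define r where "r = sqrt b"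
  have r: "r > 0" "r\<^sup>2 = b" using b by (simp_all add: r_def)
  have "gaussian b \<mu> (s + real k * h) = exp (- (r * (s - \<mu>) + real k * (r * h))\<^sup>2 / 2)" for k
    unfolding gaussian_def r(2)[symmetric] power_mult_distrib[symmetric] by (simp add: algebra_simps)
  then have "h * (\<Sum>k<N. gaussian b \<mu> (s + real k * h))
      = (r * h) * (\<Sum>k<N. exp (- (r * (s - \<mu>) + real k * (r * h))\<^sup>2 / 2)) / r"
    using r by simp
  also have "\<dots> \<le> (sqrt (2 * pi) + (r * h)\<^sup>2 / 4 * exp (- 1 / 2)) / r"
    using r h by (intro divide_right_mono std_gaussian_riemann_sum_le) auto
  also have "\<dots> = sqrt (2 * pi / b) + h\<^sup>2 / 4 * sqrt b * exp (- 1 / 2)"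
    using r by (simp add: r_def real_sqrt_divide power_mult_distrib field_simps)
  finally show ?thesis .
qed

lemma eta_nonneg: "0 \<le> eta"
  unfolding eta_def by simp

lemma eta_mult_sqrt_2pi: "eta * sqrt (2 * pi) = 3 / 2 * exp (- 1 / 2)"
proof -
  have "sqrt (exp 1) = exp (1 / 2 :: real)"
    by (rule real_sqrt_unique) (simp_all add: power2_eq_square exp_add[symmetric])
  moreover have "sqrt (8 * pi * exp 1) = 2 * sqrt (2 * pi) * sqrt (exp 1)"
    using real_sqrt_mult[of 4 "2 * pi * exp 1"] by (simp add: real_sqrt_mult)
  ultimately show ?thesis
    unfolding eta_def by (simp add: exp_minus[of "1 / 2", simplified] field_simps)
qed

lemma sum_grid:
  assumes "n \<ge> 1"
  shows "(\<Sum>x\<in>grid n. g x) = (\<Sum>k<Suc n. g (- sqrt (real n) + real k * (2 / sqrt (real n))))"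
proof -
  have "inj_on (\<lambda>k::nat. - sqrt (real n) + 2 * real k / sqrt (real n)) {0..n}"
    using assms by (auto simp: inj_on_def)
  then show ?thesis
    unfolding grid_def
    by (subst sum.reindex) (auto simp: atLeast0AtMost lessThan_Suc_atMost mult.commute intro!: sum.cong)
qed

lemma grid_sum_gaussian_le:
  assumes b: "b > 0" and n: "n \<ge> 1"
  shows "2 / sqrt (real n) * (\<Sum>x\<in>grid n. gaussian b \<mu> x)
           \<le> (1 + eta * b / real n) * sqrt (2 * pi / b)"
proof -
  have slope: "sqrt b * exp (- 1 / 2) \<le> eta * b * sqrt (2 * pi / b)"
  proof -
    have "sqrt b * exp (- 1 / 2) = 2 / 3 * (eta * sqrt (2 * pi) * sqrt b)"
      unfolding eta_mult_sqrt_2pi by simp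
    also have "\<dots> \<le> eta * sqrt (2 * pi) * sqrt b"
      using eta_nonneg b by simp
    also have "\<dots> = eta * b * sqrt (2 * pi / b)"
      using b by (simp add: real_sqrt_divide field_simps)
    finally show ?thesis .
  qed
  have "2 / sqrt (real n) * (\<Sum>x\<in>grid n. gaussian b \<mu> x)
      \<le> sqrt (2 * pi / b) + (2 / sqrt (real n))\<^sup>2 / 4 * sqrt b * exp (- 1 / 2)"
    unfolding sum_grid[OF n] by (rule gaussian_riemann_sum_le[OF b]) simp
  also have "\<dots> = sqrt (2 * pi / b) + 1 / real n * (sqrt b * exp (- 1 / 2))"
    using n by (simp add: power_divide)
  also have "\<dots> \<le> sqrt (2 * pi / b) + 1 / real n * (eta * b * sqrt (2 * pi / b))"
    using slope by (intro add_left_mono mult_left_mono) auto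
  finally show ?thesis by (simp add: algebra_simps)
qed

section \<open>Integrals on \<open>\<real>\<^sup>2\<close> and \<open>\<real>\<^sup>3\<close>\<close>

lemma vector2_eq_axis: "(vector [x1, x2] :: real^2) = x1 *\<^sub>R axis 1 1 + x2 *\<^sub>R axis 2 (1::real)"
  by (simp add: vec_eq_iff forall_2 axis_def)

lemma vector3_eq_axis:
  "(vector [x1, x2, x3] :: real^3) = x1 *\<^sub>R axis 1 1 + x2 *\<^sub>R axis 2 1 + x3 *\<^sub>R axis 3 1"
  by (simp add: vec_eq_iff forall_3 axis_def)

lemma continuous_on_vector2 [continuous_intros]:
  "continuous_on S f \<Longrightarrow> continuous_on S g \<Longrightarrow> continuous_on S (\<lambda>x. vector [f x, g x] :: real^2)"
  unfolding vector2_eq_axis by (intro continuous_intros)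

lemma continuous_on_vector3 [continuous_intros]:
  "continuous_on S f \<Longrightarrow> continuous_on S g \<Longrightarrow> continuous_on S h \<Longrightarrow>
    continuous_on S (\<lambda>x. vector [f x, g x, h x] :: real^3)"
  unfolding vector3_eq_axis by (intro continuous_intros)

lemma prod_Basis_vec: "(\<Prod>b\<in>(Basis :: (real^'n) set). f b) = (\<Prod>i\<in>UNIV. f (axis i 1))"
proof -
  have B: "(Basis :: (real^'n) set) = range (\<lambda>i. axis i 1)" by (auto simp: Basis_vec_def)
  have "inj (\<lambda>i::'n. axis i (1::real))" by (auto simp: inj_def axis_eq_axis)
  then show ?thesis unfolding B by (subst prod.reindex) simp_all
qed

lemma distr_lborel_vector2:
  "distr (lborel \<Otimes>\<^sub>M lborel) borel (\<lambda>(x1, x2). vector [x1, x2] :: real^2) = lborel"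
proof (rule lborel_eqI[symmetric])
  let ?T = "\<lambda>(x1, x2). vector [x1, x2] :: real^2"
  have "?T \<in> borel_measurable borel"
    by (intro borel_measurable_continuous_onI) (simp add: case_prod_beta' continuous_intros)
  then have T: "?T \<in> borel_measurable (lborel \<Otimes>\<^sub>M lborel)"
    unfolding lborel_prod by simp
  fix l u :: "real^2" assume le: "\<And>b. b \<in> Basis \<Longrightarrow> l \<bullet> b \<le> u \<bullet> b"
  have lu: "l $ i \<le> u $ i" for i using le[of "axis i 1"] by (simp add: inner_axis)
  have "?T -` box l u \<inter> space (lborel \<Otimes>\<^sub>M lborel) = {l$1<..<u$1} \<times> {l$2<..<u$2}"
    by (auto simp: space_pair_measure mem_box_cart forall_2)
  then have "emeasure (distr (lborel \<Otimes>\<^sub>M lborel) borel ?T) (box l u)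
      = ennreal (u$1 - l$1) * ennreal (u$2 - l$2)"
    by (simp add: emeasure_distr[OF T] lborel.emeasure_pair_measure_Times lu)
  also have "\<dots> = (\<Prod>b\<in>Basis. (u - l) \<bullet> b)"
    using lu by (simp add: prod_Basis_vec UNIV_2 inner_axis ennreal_mult)
  finally show "emeasure (distr (lborel \<Otimes>\<^sub>M lborel) borel ?T) (box l u)
      = (\<Prod>b\<in>Basis. (u - l) \<bullet> b)" .
qed simp

lemma distr_lborel_vector3:
  "distr (lborel \<Otimes>\<^sub>M lborel) borel (\<lambda>(x1, y :: real^2). vector [x1, y$1, y$2] :: real^3) = lborel"
proof (rule lborel_eqI[symmetric])
  let ?T = "\<lambda>(x1, y :: real^2). vector [x1, y$1, y$2] :: real^3"
  have "?T \<in> borel_measurable borel"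
    by (intro borel_measurable_continuous_onI) (simp add: case_prod_beta' continuous_intros)
  then have T: "?T \<in> borel_measurable (lborel \<Otimes>\<^sub>M lborel)"
    unfolding lborel_prod by simp
  fix l u :: "real^3" assume le: "\<And>b. b \<in> Basis \<Longrightarrow> l \<bullet> b \<le> u \<bullet> b"
  have lu: "l $ i \<le> u $ i" for i using le[of "axis i 1"] by (simp add: inner_axis)
  define l' u' :: "real^2" where "l' = vector [l$2, l$3]" and "u' = vector [u$2, u$3]"
  have "l' $ i \<le> u' $ i" for i
    using lu exhaust_2[of i] by (auto simp: l'_def u'_def)
  then have lu': "l' \<bullet> b \<le> u' \<bullet> b" if "b \<in> Basis" for b
    using that by (auto simp: Basis_vec_def inner_axis)
  have "?T -` box l u \<inter> space (lborel \<Otimes>\<^sub>M lborel) = {l$1<..<u$1} \<times> box l' u'"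
    by (auto simp: space_pair_measure mem_box_cart forall_2 forall_3 l'_def u'_def)
  then have "emeasure (distr (lborel \<Otimes>\<^sub>M lborel) borel ?T) (box l u)
      = ennreal (u$1 - l$1) * (\<Prod>b\<in>Basis. (u' - l') \<bullet> b)"
    using lu' by (simp add: emeasure_distr[OF T] lborel.emeasure_pair_measure_Times lu)
  also have "(\<Prod>b\<in>Basis. (u' - l') \<bullet> b) = (u$2 - l$2) * (u$3 - l$3)"
    by (simp add: prod_Basis_vec UNIV_2 inner_axis l'_def u'_def)
  also have "ennreal (u$1 - l$1) * ennreal ((u$2 - l$2) * (u$3 - l$3))
      = (\<Prod>b\<in>Basis. (u - l) \<bullet> b)"
  proof -
    have "(1::3) \<notin> {2, 3}" "(2::3) \<notin> {3}" by auto
    then have "(\<Prod>i\<in>UNIV. (u - l) \<bullet> axis i 1) = (u$1 - l$1) * ((u$2 - l$2) * (u$3 - l$3))"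
      unfolding UNIV_3 by (simp add: inner_axis)
    then have "(\<Prod>b\<in>Basis. (u - l) \<bullet> b) = (u$1 - l$1) * ((u$2 - l$2) * (u$3 - l$3))"
      by (simp only: prod_Basis_vec)
    then show ?thesis using lu by (simp add: ennreal_mult')
  qed
  finally show "emeasure (distr (lborel \<Otimes>\<^sub>M lborel) borel ?T) (box l u)
      = (\<Prod>b\<in>Basis. (u - l) \<bullet> b)" .
qed simp

lemma has_integral_iterated_lborel:
  fixes T :: "real \<times> 'b::euclidean_space \<Rightarrow> 'a::euclidean_space"
    and f :: "'a \<Rightarrow> real" and g :: "'b \<Rightarrow> real"
  assumes T: "continuous_on UNIV T" "distr (lborel \<Otimes>\<^sub>M lborel) borel T = lborel"
    and f: "continuous_on UNIV f" "\<And>x. 0 \<le> f x"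
    and g: "continuous_on UNIV g"
    and inner: "\<And>y. ((\<lambda>x1. f (T (x1, y))) has_integral g y) UNIV"
    and outer: "(g has_integral I) UNIV"
  shows "(f has_integral I) UNIV"
proof -
  have fT: "continuous_on UNIV (\<lambda>p. f (T p))"
    using continuous_on_compose[OF T(1) continuous_on_subset[OF f(1)]] by (simp add: comp_def)
  have f_meas: "f \<in> borel_measurable borel"
    using f(1) by (rule borel_measurable_continuous_onI)
  have g_nonneg: "0 \<le> g y" for y
    using inner[of y] f(2) by (rule has_integral_nonneg)
  have "(\<integral>\<^sup>+x. ennreal (f x) \<partial>lborel)
      = (\<integral>\<^sup>+x. ennreal (f x) \<partial>distr (lborel \<Otimes>\<^sub>M lborel) borel T)"
    by (simp add: T(2))
  also have "\<dots> = (\<integral>\<^sup>+p. ennreal (f (T p)) \<partial>(lborel \<Otimes>\<^sub>M lborel))"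
  proof (rule nn_integral_distr)
    show "T \<in> lborel \<Otimes>\<^sub>M lborel \<rightarrow>\<^sub>M borel"
      unfolding lborel_prod using borel_measurable_continuous_onI[OF T(1)] by simp
  qed (use f_meas in simp)
  also have "\<dots> = (\<integral>\<^sup>+y. \<integral>\<^sup>+x1. ennreal (f (T (x1, y))) \<partial>lborel \<partial>lborel)"
  proof (rule lborel_pair.nn_integral_snd[symmetric])
    show "(\<lambda>p. ennreal (f (T p))) \<in> borel_measurable (lborel \<Otimes>\<^sub>M lborel)"
      unfolding lborel_prod using borel_measurable_continuous_onI[OF fT] by simp
  qed
  also have "\<dots> = (\<integral>\<^sup>+y. ennreal (g y) \<partial>lborel)"
  proof (intro nn_integral_cong nn_integral_has_integral_lborel[OF _ f(2) inner])
    show "(\<lambda>x1. f (T (x1, y))) \<in> borel_measurable borel" for y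
      by (intro borel_measurable_continuous_onI continuous_on_compose2[OF fT])
        (auto intro!: continuous_intros)
  qed
  also have "\<dots> = ennreal I"
    using g g_nonneg outer by (intro nn_integral_has_integral_lborel borel_measurable_continuous_onI)
  finally show ?thesis
    using f f_meas has_integral_nonneg[OF outer g_nonneg] by (intro nn_integral_has_integral) auto
qed

lemma integral_le_majorant:
  fixes f g :: "'a::euclidean_space \<Rightarrow> real"
  assumes f: "continuous_on UNIV f" "\<And>x. 0 \<le> f x"
    and le: "\<And>x. f x \<le> g x" and g: "(g has_integral J) UNIV"
  shows "f integrable_on UNIV" "integral UNIV f \<le> J"
proof -
  show int: "f integrable_on UNIV"
  proof (rule measurable_bounded_by_integrable_imp_integrable_real)
    show "f \<in> borel_measurable (lebesgue_on UNIV)"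
      using f(1) by (rule continuous_imp_measurable_on_sets_lebesgue) simp
    show "\<bar>f x\<bar> \<le> g x" for x
      using f(2) le by (simp add: abs_of_nonneg)
  qed (use g in auto)
  show "integral UNIV f \<le> J"
    using has_integral_le[OF integrable_integral[OF int] g] le by simp
qed

section \<open>Completing the square\<close>

lemma pos_def_mat_diag_pos:
  assumes "pos_def_mat B"
  shows "0 < B $ i $ i"
proof -
  have "0 < axis i 1 \<bullet> (B *v axis i 1)"
    using assms unfolding pos_def_mat_def by (simp add: axis_eq_0_iff)
  also have "axis i 1 \<bullet> (B *v axis i 1) = B $ i $ i"
    by (simp add: matrix_vector_mult_basis inner_axis' column_def)
  finally show ?thesis .
qed

lemma quadratic_form_vector2:
  fixes B :: "real^2^2"
  assumes "transpose B = B"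
  shows "vector [x1, x2] \<bullet> (B *v vector [x1, x2])
    = B$1$1 * x1\<^sup>2 + 2 * B$1$2 * x1 * x2 + B$2$2 * x2\<^sup>2"
proof -
  have "B$2$1 = B$1$2" using arg_cong[OF assms, of "\<lambda>M. M$1$2"] by (simp add: transpose_def)
  then show ?thesis
    by (simp add: inner_vec_def matrix_vector_mult_def sum_2 power2_eq_square algebra_simps)
qed

lemma quadratic_form_vector3:
  fixes B :: "real^3^3"
  assumes "transpose B = B"
  shows "vector [x1, x2, x3] \<bullet> (B *v vector [x1, x2, x3])
    = B$1$1 * x1\<^sup>2 + B$2$2 * x2\<^sup>2 + B$3$3 * x3\<^sup>2
      + 2 * B$1$2 * x1 * x2 + 2 * B$1$3 * x1 * x3 + 2 * B$2$3 * x2 * x3"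
proof -
  have "B$2$1 = B$1$2" "B$3$1 = B$1$3" "B$3$2 = B$2$3"
    using arg_cong[OF assms, of "\<lambda>M. M$1$2"] arg_cong[OF assms, of "\<lambda>M. M$1$3"]
      arg_cong[OF assms, of "\<lambda>M. M$2$3"]
    by (simp_all add: transpose_def)
  then show ?thesis
    by (simp add: inner_vec_def matrix_vector_mult_def sum_3 power2_eq_square algebra_simps)
qed

definition schur_complement2 :: "real^2^2 \<Rightarrow> real" where
  "schur_complement2 B = B$2$2 - (B$1$2)\<^sup>2 / B$1$1"

definition schur_complement3 :: "real^3^3 \<Rightarrow> real^2^2" where
  "schur_complement3 B = (let s = (\<lambda>i j. B$i$j - B$1$i * B$1$j / B$1$1) in
     vector [vector [s 2 2, s 2 3], vector [s 3 2, s 3 3]])"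

lemma quadratic_form_vector2_split:
  fixes B :: "real^2^2"
  assumes "transpose B = B" "B$1$1 \<noteq> 0"
  shows "vector [x1, x2] \<bullet> (B *v vector [x1, x2])
    = B$1$1 * (x1 + B$1$2 * x2 / B$1$1)\<^sup>2 + schur_complement2 B * x2\<^sup>2"
  using assms(2) unfolding quadratic_form_vector2[OF assms(1)] schur_complement2_def
  by (simp add: field_simps power2_eq_square)

lemma quadratic_form_vector3_split:
  fixes B :: "real^3^3"
  assumes "transpose B = B" "B$1$1 \<noteq> 0"
  shows "vector [x1, x2, x3] \<bullet> (B *v vector [x1, x2, x3])
    = B$1$1 * (x1 + (B$1$2 * x2 + B$1$3 * x3) / B$1$1)\<^sup>2
      + vector [x2, x3] \<bullet> (schur_complement3 B *v vector [x2, x3])"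
proof -
  have "B$3$2 = B$2$3" using arg_cong[OF assms(1), of "\<lambda>M. M$2$3"] by (simp add: transpose_def)
  with assms(2) show ?thesis
    unfolding quadratic_form_vector3[OF assms(1)] schur_complement3_def Let_def
    by (simp add: inner_vec_def matrix_vector_mult_def sum_2 field_simps power2_eq_square)
qed

lemma schur_complement2_pos:
  assumes "pos_def_mat B"
  shows "0 < schur_complement2 B"
proof -
  have B: "transpose B = B" "B$1$1 > 0"
    using assms pos_def_mat_diag_pos unfolding pos_def_mat_def by auto
  define x :: "real^2" where "x = vector [- B$1$2 / B$1$1, 1]"
  have "x $ 2 \<noteq> 0" by (simp add: x_def)
  then have "x \<noteq> 0" by auto
  then have "0 < x \<bullet> (B *v x)" using assms unfolding pos_def_mat_def by simp
  also have "x \<bullet> (B *v x) = schur_complement2 B"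
    unfolding x_def quadratic_form_vector2_split[OF B(1) less_imp_neq[OF B(2), symmetric]] by simp
  finally show ?thesis .
qed

lemma pos_def_mat_schur_complement3:
  assumes "pos_def_mat B"
  shows "pos_def_mat (schur_complement3 B)"
  unfolding pos_def_mat_def
proof (intro conjI allI impI)
  have B: "transpose B = B" "B$1$1 \<noteq> 0"
    using assms pos_def_mat_diag_pos[OF assms, of 1] unfolding pos_def_mat_def by auto
  have "B$3$2 = B$2$3" using arg_cong[OF B(1), of "\<lambda>M. M$2$3"] by (simp add: transpose_def)
  then show "transpose (schur_complement3 B) = schur_complement3 B"
    by (simp add: schur_complement3_def transpose_def vec_eq_iff forall_2 mult.commute)
  fix y :: "real^2" assume "y \<noteq> 0"
  define x :: "real^3" where "x = vector [- ((B$1$2 * y$1 + B$1$3 * y$2) / B$1$1), y$1, y$2]"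
  have y: "vector [y$1, y$2] = y" by (simp add: vec_eq_iff forall_2)
  have "x $ 2 \<noteq> 0 \<or> x $ 3 \<noteq> 0" using \<open>y \<noteq> 0\<close> by (auto simp: x_def vec_eq_iff forall_2)
  then have "x \<noteq> 0" by auto
  then have "0 < x \<bullet> (B *v x)" using assms unfolding pos_def_mat_def by simp
  also have "x \<bullet> (B *v x) = y \<bullet> (schur_complement3 B *v y)"
    unfolding x_def quadratic_form_vector3_split[OF B] y by simp
  finally show "0 < y \<bullet> (schur_complement3 B *v y)" .
qed

lemma schur_complement3_le:
  assumes "pos_def_mat B"
  shows "schur_complement3 B $ 1 $ 1 \<le> B $ 2 $ 2"
  using pos_def_mat_diag_pos[OF assms, of 1] by (simp add: schur_complement3_def)

section \<open>Discretised Gaussian integrals on \<open>\<real>\<^sup>2\<close> and \<open>\<real>\<^sup>3\<close>\<close>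

lemma continuous_on_gaussian [continuous_intros]:
  "continuous_on S f \<Longrightarrow> continuous_on S (\<lambda>x. gaussian b \<mu> (f x))"
  unfolding gaussian_def by (intro continuous_intros) auto

lemma continuous_on_gauss [continuous_intros]:
  "continuous_on S f \<Longrightarrow> continuous_on S (\<lambda>x. gauss B (f x))"
proof (rule continuous_on_compose2[of UNIV "gauss B"])
  show "continuous_on UNIV (gauss B)"
    unfolding gauss_def by (intro continuous_intros) auto
qed auto

lemma gauss_vector2_split:
  assumes "pos_def_mat B"
  shows "gauss B (vector [x1, x2])
    = gaussian (schur_complement2 B) 0 x2 * gaussian (B$1$1) (- (B$1$2 * x2 / B$1$1)) x1"
proof -
  have "transpose B = B" "B$1$1 \<noteq> 0"
    using assms pos_def_mat_diag_pos[OF assms, of 1] unfolding pos_def_mat_def by auto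
  then show ?thesis
    unfolding gauss_def gaussian_def quadratic_form_vector2_split[OF \<open>transpose B = B\<close> \<open>B$1$1 \<noteq> 0\<close>]
    by (simp add: mult_exp_exp field_simps)
qed

lemma gauss_vector3_split:
  assumes "pos_def_mat B"
  shows "gauss B (vector [x1, x2, x3]) = gauss (schur_complement3 B) (vector [x2, x3])
    * gaussian (B$1$1) (- ((B$1$2 * x2 + B$1$3 * x3) / B$1$1)) x1"
proof -
  have "transpose B = B" "B$1$1 \<noteq> 0"
    using assms pos_def_mat_diag_pos[OF assms, of 1] unfolding pos_def_mat_def by auto
  then show ?thesis
    unfolding gauss_def gaussian_def quadratic_form_vector3_split[OF \<open>transpose B = B\<close> \<open>B$1$1 \<noteq> 0\<close>]
    by (simp add: mult_exp_exp field_simps)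
qed

lemma has_integral_gauss_vector2_x1:
  assumes "pos_def_mat B"
  shows "((\<lambda>x1. gauss B (vector [x1, x2])) has_integral
           sqrt (2 * pi / B$1$1) * gaussian (schur_complement2 B) 0 x2) UNIV"
  unfolding gauss_vector2_split[OF assms]
  using has_integral_mult_left[OF has_integral_gaussian[OF pos_def_mat_diag_pos[OF assms]]]
  by (simp add: mult.commute)

lemma grid_sum_gauss_vector2_le:
  assumes "pos_def_mat B" "n \<ge> 1"
  shows "2 / sqrt (real n) * (\<Sum>x1\<in>grid n. gauss B (vector [x1, x2]))
    \<le> (1 + eta * B$1$1 / real n) * sqrt (2 * pi / B$1$1) * gaussian (schur_complement2 B) 0 x2"
proof -
  let ?\<mu> = "- (B$1$2 * x2 / B$1$1)"
  have "2 / sqrt (real n) * (\<Sum>x1\<in>grid n. gauss B (vector [x1, x2]))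
      = (2 / sqrt (real n) * (\<Sum>x1\<in>grid n. gaussian (B$1$1) ?\<mu> x1)) * gaussian (schur_complement2 B) 0 x2"
    unfolding gauss_vector2_split[OF assms(1)] by (simp add: sum_distrib_left sum_distrib_right mult_ac)
  also have "\<dots> \<le> ((1 + eta * B$1$1 / real n) * sqrt (2 * pi / B$1$1)) * gaussian (schur_complement2 B) 0 x2"
    by (intro mult_right_mono grid_sum_gaussian_le pos_def_mat_diag_pos assms) (simp add: gaussian_def)
  finally show ?thesis .
qed

lemma has_integral_gauss_vector2:
  assumes "pos_def_mat B"
  shows "(gauss B has_integral sqrt (2 * pi / B$1$1) * sqrt (2 * pi / schur_complement2 B)) UNIV"
proof (rule has_integral_iterated_lborel[OF _ distr_lborel_vector2])
  show "((\<lambda>x1. gauss B (case (x1, x2) of (x1, x2) \<Rightarrow> vector [x1, x2])) has_integral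
          sqrt (2 * pi / B$1$1) * gaussian (schur_complement2 B) 0 x2) UNIV" for x2
    using has_integral_gauss_vector2_x1[OF assms] by simp
  show "((\<lambda>x2. sqrt (2 * pi / B$1$1) * gaussian (schur_complement2 B) 0 x2) has_integral
          sqrt (2 * pi / B$1$1) * sqrt (2 * pi / schur_complement2 B)) UNIV"
    by (intro has_integral_mult_right has_integral_gaussian schur_complement2_pos assms)
  show "continuous_on UNIV (\<lambda>(x1, x2). vector [x1, x2] :: real^2)"
    by (simp add: case_prod_beta' continuous_intros)
  show "continuous_on UNIV (gauss B)"
    using continuous_on_gauss[OF continuous_on_id] by simp
  show "continuous_on UNIV (\<lambda>x2. sqrt (2 * pi / B$1$1) * gaussian (schur_complement2 B) 0 x2)"
    by (intro continuous_intros)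
qed (simp add: gauss_def)

lemma grid_integral_gauss_vector2_le:
  fixes B :: "real^2^2"
  assumes B: "pos_def_mat B" and n: "n \<ge> 1"
  shows "(\<lambda>x2. 2 / sqrt (real n) * (\<Sum>x1\<in>grid n. gauss B (vector [x1, x2]))) integrable_on UNIV"
    and "integral UNIV (\<lambda>x2. 2 / sqrt (real n) * (\<Sum>x1\<in>grid n. gauss B (vector [x1, x2])))
           \<le> (1 + eta * B$1$1 / real n) * integral UNIV (gauss B)"
proof -
  let ?c = "(1 + eta * B$1$1 / real n) * sqrt (2 * pi / B$1$1)" and ?s = "schur_complement2 B"
  have "((\<lambda>x2. ?c * gaussian ?s 0 x2) has_integral ?c * sqrt (2 * pi / ?s)) UNIV"
    by (intro has_integral_mult_right has_integral_gaussian schur_complement2_pos B)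
  moreover have "continuous_on UNIV (\<lambda>x2. 2 / sqrt (real n) * (\<Sum>x1\<in>grid n. gauss B (vector [x1, x2])))"
    by (intro continuous_intros)
  moreover have "0 \<le> 2 / sqrt (real n) * (\<Sum>x1\<in>grid n. gauss B (vector [x1, x2]))" for x2
    by (simp add: gauss_def sum_nonneg)
  ultimately show "(\<lambda>x2. 2 / sqrt (real n) * (\<Sum>x1\<in>grid n. gauss B (vector [x1, x2]))) integrable_on UNIV"
    and "integral UNIV (\<lambda>x2. 2 / sqrt (real n) * (\<Sum>x1\<in>grid n. gauss B (vector [x1, x2])))
           \<le> (1 + eta * B$1$1 / real n) * integral UNIV (gauss B)"
    using integral_le_majorant[OF _ _ grid_sum_gauss_vector2_le[OF B n]]
    by (auto simp: integral_unique[OF has_integral_gauss_vector2[OF B]] mult.assoc)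
qed

lemma has_integral_gauss_vector3_x1:
  assumes "pos_def_mat B"
  shows "((\<lambda>x1. gauss B (vector [x1, x2, x3])) has_integral
           sqrt (2 * pi / B$1$1) * gauss (schur_complement3 B) (vector [x2, x3])) UNIV"
  unfolding gauss_vector3_split[OF assms]
  using has_integral_mult_left[OF has_integral_gaussian[OF pos_def_mat_diag_pos[OF assms]]]
  by (simp add: mult.commute)

lemma grid_sum_gauss_vector3_le:
  assumes "pos_def_mat B" "n \<ge> 1"
  shows "2 / sqrt (real n) * (\<Sum>x1\<in>grid n. gauss B (vector [x1, x2, x3]))
    \<le> (1 + eta * B$1$1 / real n) * sqrt (2 * pi / B$1$1) * gauss (schur_complement3 B) (vector [x2, x3])"
proof -
  let ?\<mu> = "- ((B$1$2 * x2 + B$1$3 * x3) / B$1$1)" and ?S = "schur_complement3 B"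
  have "2 / sqrt (real n) * (\<Sum>x1\<in>grid n. gauss B (vector [x1, x2, x3]))
      = (2 / sqrt (real n) * (\<Sum>x1\<in>grid n. gaussian (B$1$1) ?\<mu> x1)) * gauss ?S (vector [x2, x3])"
    unfolding gauss_vector3_split[OF assms(1)] by (simp add: sum_distrib_left sum_distrib_right mult_ac)
  also have "\<dots> \<le> ((1 + eta * B$1$1 / real n) * sqrt (2 * pi / B$1$1)) * gauss ?S (vector [x2, x3])"
    by (intro mult_right_mono grid_sum_gaussian_le pos_def_mat_diag_pos assms) (simp add: gauss_def)
  finally show ?thesis .
qed

lemma has_integral_gauss_vector3:
  assumes "pos_def_mat B"
  shows "(gauss B has_integral sqrt (2 * pi / B$1$1) * integral UNIV (gauss (schur_complement3 B))) UNIV"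
proof (rule has_integral_iterated_lborel[OF _ distr_lborel_vector3])
  let ?S = "schur_complement3 B"
  have y: "vector [y$1, y$2] = y" for y :: "real^2" by (simp add: vec_eq_iff forall_2)
  show "((\<lambda>x1. gauss B (case (x1, y) of (x1, y) \<Rightarrow> vector [x1, y$1, y$2])) has_integral
          sqrt (2 * pi / B$1$1) * gauss ?S y) UNIV" for y
    using has_integral_gauss_vector3_x1[OF assms, of "y$1" "y$2"] by (simp add: y)
  have "(gauss ?S has_integral integral UNIV (gauss ?S)) UNIV"
    using has_integral_gauss_vector2[OF pos_def_mat_schur_complement3[OF assms]]
    by (simp add: has_integral_integrable_integral)
  then show "((\<lambda>y. sqrt (2 * pi / B$1$1) * gauss ?S y) has_integral
          sqrt (2 * pi / B$1$1) * integral UNIV (gauss ?S)) UNIV"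
    by (rule has_integral_mult_right)
  show "continuous_on UNIV (\<lambda>(x1, y :: real^2). vector [x1, y$1, y$2] :: real^3)"
    by (simp add: case_prod_beta' continuous_intros)
  show "continuous_on UNIV (gauss B)"
    using continuous_on_gauss[OF continuous_on_id] by simp
  show "continuous_on UNIV (\<lambda>y. sqrt (2 * pi / B$1$1) * gauss ?S y)"
    by (intro continuous_intros)
qed (simp add: gauss_def)

lemma grid_integral_gauss_vector3_le:
  fixes B :: "real^3^3"
  assumes B: "pos_def_mat B" and n: "n \<ge> 1" and n': "n' \<ge> 1"
  shows "integral UNIV (\<lambda>x3. 2 / sqrt (real n) * (2 / sqrt (real n')) *
            (\<Sum>x1\<in>grid n. \<Sum>x2\<in>grid n'. gauss B (vector [x1, x2, x3])))
         \<le> (1 + eta * B$1$1 / real n) * (1 + eta * B$2$2 / real n') * integral UNIV (gauss B)"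
proof -
  let ?S = "schur_complement3 B"
  let ?c = "(1 + eta * B$1$1 / real n) * sqrt (2 * pi / B$1$1)"
  let ?G = "\<lambda>x3. 2 / sqrt (real n') * (\<Sum>x2\<in>grid n'. gauss ?S (vector [x2, x3]))"
  have S: "pos_def_mat ?S" by (rule pos_def_mat_schur_complement3[OF B])
  have c: "0 \<le> ?c" using eta_nonneg pos_def_mat_diag_pos[OF B, of 1] by simp
  let ?F = "\<lambda>x3. 2 / sqrt (real n) * (2 / sqrt (real n')) *
            (\<Sum>x1\<in>grid n. \<Sum>x2\<in>grid n'. gauss B (vector [x1, x2, x3]))"
  have "?F x3 \<le> ?c * ?G x3" for x3
  proof -
    have "?F x3 = 2 / sqrt (real n') *
        (\<Sum>x2\<in>grid n'. 2 / sqrt (real n) * (\<Sum>x1\<in>grid n. gauss B (vector [x1, x2, x3])))"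
      by (subst sum.swap) (simp add: sum_distrib_left mult_ac)
    also have "\<dots> \<le> 2 / sqrt (real n') * (\<Sum>x2\<in>grid n'. ?c * gauss ?S (vector [x2, x3]))"
      by (intro mult_left_mono sum_mono grid_sum_gauss_vector3_le[OF B n]) simp
    also have "\<dots> = ?c * ?G x3"
      by (simp add: sum_distrib_left mult_ac)
    finally show ?thesis .
  qed
  moreover have "((\<lambda>x3. ?c * ?G x3) has_integral ?c * integral UNIV ?G) UNIV"
    by (intro has_integral_mult_right integrable_integral grid_integral_gauss_vector2_le(1)[OF S n'])
  moreover have "continuous_on UNIV ?F"
    by (intro continuous_intros)
  moreover have "0 \<le> ?F x3" for x3
    by (simp add: gauss_def sum_nonneg)
  ultimately have "integral UNIV ?F \<le> ?c * integral UNIV ?G"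
    by (intro integral_le_majorant(2))
  also have "\<dots> \<le> ?c * ((1 + eta * ?S$1$1 / real n') * integral UNIV (gauss ?S))"
    by (intro mult_left_mono grid_integral_gauss_vector2_le(2)[OF S n'] c)
  also have "\<dots> \<le> ?c * ((1 + eta * B$2$2 / real n') * integral UNIV (gauss ?S))"
  proof -
    have "0 \<le> integral UNIV (gauss ?S)"
      by (intro integral_nonneg integrable_integral has_integral_integrable[OF has_integral_gauss_vector2[OF S]])
        (simp add: gauss_def)
    moreover have "eta * ?S$1$1 / real n' \<le> eta * B$2$2 / real n'"
      by (intro divide_right_mono mult_left_mono schur_complement3_le[OF B] eta_nonneg) simp
    ultimately show ?thesis by (intro mult_left_mono mult_right_mono c) auto
  qed
  also have "\<dots> = (1 + eta * B$1$1 / real n) * (1 + eta * B$2$2 / real n') * integral UNIV (gauss B)"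
    by (simp add: integral_unique[OF has_integral_gauss_vector3[OF B]] mult_ac)
  finally show ?thesis .
qed

theorem mainTheorem16:
  shows "(\<forall>(n::nat) (B::real^2^2). n \<ge> 1 \<longrightarrow> pos_def_mat B \<longrightarrow>
            integral UNIV (\<lambda>x2::real. (2 / sqrt (real n)) *
               (\<Sum>x1\<in>grid n. gauss B (vector [x1, x2])))
            \<le> (1 + eta * B $ 1 $ 1 / real n) * integral UNIV (gauss B))
       \<and> (\<forall>(n::nat) (n'::nat) (B::real^3^3). n \<ge> 1 \<longrightarrow> n' \<ge> 1 \<longrightarrow> pos_def_mat B \<longrightarrow>
            integral UNIV (\<lambda>x3::real. (2 / sqrt (real n)) * (2 / sqrt (real n')) *
               (\<Sum>x1\<in>grid n. \<Sum>x2\<in>grid n'. gauss B (vector [x1, x2, x3])))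
            \<le> (1 + eta * B $ 1 $ 1 / real n) * (1 + eta * B $ 2 $ 2 / real n')
               * integral UNIV (gauss B))"
  using grid_integral_gauss_vector2_le(2) grid_integral_gauss_vector3_le by blast

end
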